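(* Assume $K_1\subseteq K_2\subseteq\cdots\subseteq K_n\subseteq\mathbb F_q$ are subfields, $d_i=|K_i|$. Let $f\in\mathbb F_q[X_1,\dots,X_n]$ have degree $d=\sum_{i=1}^k(d_i-1)+\ell$ with $0\le k<n$ and $0<\ell\le d_{k+1}-1$, and suppose no monomial occurring in $f$ is divisible by $X_i^{d_i}$ for any $i\in\{1,\dots,n\}$. If the Hamming weight of $\Psi(f)$ equals $(d_{k+1}-\ell)\prod_{i=k+2}^n d_i$, then there exist $j\in\{1,\dots,k+1\}$ with $d_j\ge d_{k+1}-\ell$ and distinct indices $t_1,\dots,t_{k+1}\in\{1,\dots,n\}$ with $K_{t_i}=K_i$ for all $i\in\{1,\dots,k+1\}$, such that the monomial $$X_{t_j}^{\,d_j-(d_{k+1}-\ell)}\prod_{\substack{i=1\\ i\ne j}}^{k+1}X_{t_i}^{\,d_i-1}$$ occurs in $f$ with nonzero coefficient.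
   Context: $\mathcal X=K_1\times\cdots\times K_n=\{\boldsymbol\alpha_1,\dots,\boldsymbol\alpha_m\}$ (fixed enumeration), $m=\prod d_i$, and $\Psi:\mathbb F_q[X_1,\dots,X_n]\to\mathbb F_q^m$, $f\mapsto(f(\boldsymbol\alpha_1),\dots,f(\boldsymbol\alpha_m))$. Empty products equal $1$. *)

theory Defs
  imports Main "HOL-Library.Poly_Mapping" "HOL-Library.FuncSet"
begin

type_synonym 'a mpoly_rep = "(nat \<Rightarrow>\<^sub>0 nat) \<Rightarrow>\<^sub>0 'a"

definition is_subfield :: "'a::field set \<Rightarrow> bool" where
  "is_subfield K \<longleftrightarrow> 0 \<in> K \<and> 1 \<in> K \<and>
     (\<forall>x\<in>K. \<forall>y\<in>K. x + y \<in> K \<and> x * y \<in> K) \<and>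
     (\<forall>x\<in>K. - x \<in> K) \<and> (\<forall>x\<in>K. x \<noteq> 0 \<longrightarrow> inverse x \<in> K)"

definition mono_deg :: "(nat \<Rightarrow>\<^sub>0 nat) \<Rightarrow> nat" where
  "mono_deg m = (\<Sum>v\<in>Poly_Mapping.keys m. Poly_Mapping.lookup m v)"

definition mpoly_tdeg :: "'a::zero mpoly_rep \<Rightarrow> nat" where
  "mpoly_tdeg f = Max (insert 0 (mono_deg ` Poly_Mapping.keys f))"

definition mpoly_eval :: "'a::comm_semiring_1 mpoly_rep \<Rightarrow> (nat \<Rightarrow> 'a) \<Rightarrow> 'a" where
  "mpoly_eval f \<alpha> = (\<Sum>m\<in>Poly_Mapping.keys f. Poly_Mapping.lookup f m * (\<Prod>v\<in>Poly_Mapping.keys m. \<alpha> v ^ Poly_Mapping.lookup m v))"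

text \<open>Hamming weight of \<Psi>(f): number of points of K_1 x ... x K_n where f does not vanish.\<close>
definition hamming_weight_eval :: "nat \<Rightarrow> (nat \<Rightarrow> 'a::comm_semiring_1 set) \<Rightarrow> 'a mpoly_rep \<Rightarrow> nat" where
  "hamming_weight_eval n K f = card {\<alpha> \<in> Pi\<^sub>E {1..n} K. mpoly_eval f \<alpha> \<noteq> 0}"

end

(*
  Footprint bound: a nonzero polynomial whose exponents are reduced (e_i < d_i) has at least
  prod_i (d_i - e_i) nonzeros on K_1 x ... x K_n, where e is its leading exponent for the
  lexicographic order with X_n most significant. This follows by induction on n, since a
  univariate polynomial of degree e has at most e roots.

  Box volumes: if the side lengths x_i = d_i - e_i satisfy 1 <= x_i <= d_i and the deficit
  sum_i (d_i - x_i) = deg e is at most sum_{i<=k} (d_i - 1) + l, then prod_i x_i is at least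
  (d_{k+1} - l) prod_{i>=k+2} d_i. Peeling off the first (smallest) side x_1 = y moves the
  problem to n - 1 coordinates with the budget shifted by y - 1, and the elementary inequality
  r e <= y (e - (y - r)) for r <= y <= e compares the two bounds. Following the equality
  cases through the induction shows that a box of minimal volume has exactly the shape of
  the monomial in the theorem. Since the weight of f equals this minimum, the leading
  monomial of f has that shape, and equal cardinalities in the chain of fields force
  K_{t_i} = K_i.
*)
theory Submission
  imports Defs "HOL-Computational_Algebra.Polynomial"
begin

section \<open>The footprint bound\<close>

lemma card_nonroots_ge:
  fixes a :: "nat \<Rightarrow> 'a::idom"
  assumes "finite Y" "e \<in> Y" "a e \<noteq> 0" "\<forall>y\<in>Y. e < y \<longrightarrow> a y = 0"
  shows "card B - e \<le> card {x\<in>B. (\<Sum>y\<in>Y. a y * x ^ y) \<noteq> 0}"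
proof -
  define p where "p = (\<Sum>y\<in>Y. monom (a y) y)"
  have coeff_p: "coeff p z = (if z \<in> Y then a z else 0)" for z
    unfolding p_def coeff_sum coeff_monom using assms(1) by (simp add: sum.delta)
  have "p \<noteq> 0"
    using coeff_p[of e] assms(2,3) by auto
  moreover have "degree p \<le> e"
    using coeff_p assms(4) by (intro degree_le) auto
  ultimately have roots: "card {x. poly p x = 0} \<le> e"
    using card_poly_roots_bound[of p] by simp
  have "{x\<in>B. (\<Sum>y\<in>Y. a y * x ^ y) \<noteq> 0} = B - {x. poly p x = 0}"
    by (auto simp: p_def poly_sum poly_monom)
  moreover have "card B - card {x. poly p x = 0} \<le> card (B - {x. poly p x = 0})"
    by (rule diff_card_le_card_Diff) (use poly_roots_finite \<open>p \<noteq> 0\<close> in blast)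
  ultimately show ?thesis
    using roots by simp
qed

lemma card_PiE_Suc_ge:
  assumes fin: "\<forall>i\<in>{1..Suc n}. finite (K i)"
    and G: "G \<subseteq> PiE {1..n} K"
    and fibre: "\<And>\<alpha>. \<alpha> \<in> G \<Longrightarrow> b \<le> card {x\<in>K (Suc n). P (\<alpha>(Suc n := x))}"
  shows "card G * b \<le> card {\<alpha> \<in> PiE {1..Suc n} K. P \<alpha>}"
proof -
  define X where "X \<alpha> = {x\<in>K (Suc n). P (\<alpha>(Suc n := x))}" for \<alpha>
  define ext where "ext = (\<lambda>(\<alpha>::nat \<Rightarrow> 'a, x). \<alpha>(Suc n := x))"
  have "finite (PiE {1..n} K)"
    using fin by (intro finite_PiE) auto
  with G have "finite G"
    by (rule finite_subset)
  have "inj_on ext (Sigma G X)"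
  proof (rule inj_onI, clarify)
    fix \<alpha> x \<beta> y assume "\<alpha> \<in> G" "\<beta> \<in> G" and eq: "ext (\<alpha>, x) = ext (\<beta>, y)"
    have "Suc n \<notin> {1..n}"
      by simp
    with G \<open>\<alpha> \<in> G\<close> \<open>\<beta> \<in> G\<close> have "\<alpha> (Suc n) = \<beta> (Suc n)"
      by (metis PiE_arb subsetD)
    with eq show "\<alpha> = \<beta> \<and> x = y"
      unfolding ext_def by (metis fun_upd_idem_iff fun_upd_upd fun_upd_same case_prod_conv)
  qed
  then have "card (Sigma G X) = card (ext ` Sigma G X)"
    by (simp add: card_image)
  also have "\<dots> \<le> card {\<alpha> \<in> PiE {1..Suc n} K. P \<alpha>}"
  proof (rule card_mono)
    have "finite (PiE {1..Suc n} K)"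
      using fin by (intro finite_PiE) auto
    then show "finite {\<alpha> \<in> PiE {1..Suc n} K. P \<alpha>}"
      by simp
    show "ext ` Sigma G X \<subseteq> {\<alpha> \<in> PiE {1..Suc n} K. P \<alpha>}"
      using G by (force simp: ext_def X_def PiE_iff extensional_def)
  qed
  finally have "card (Sigma G X) \<le> card {\<alpha> \<in> PiE {1..Suc n} K. P \<alpha>}" .
  moreover have "card G * b \<le> (\<Sum>\<alpha>\<in>G. card (X \<alpha>))"
    using sum_bounded_below[of G b "\<lambda>\<alpha>. card (X \<alpha>)"] fibre by (simp add: X_def mult.commute)
  moreover have "(\<Sum>\<alpha>\<in>G. card (X \<alpha>)) = card (Sigma G X)"
    using \<open>finite G\<close> fin by (simp add: card_SigmaI X_def)
  ultimately show ?thesis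
    by linarith
qed

text \<open>Exponent vectors are plain functions here, which makes slicing along the last variable easy.\<close>

definition eval_terms ::
    "nat \<Rightarrow> (nat \<Rightarrow> nat) set \<Rightarrow> ((nat \<Rightarrow> nat) \<Rightarrow> 'a::comm_semiring_1) \<Rightarrow> (nat \<Rightarrow> 'a) \<Rightarrow> 'a"
  where
  "eval_terms n S C \<alpha> = (\<Sum>m\<in>S. C m * (\<Prod>i=1..n. \<alpha> i ^ m i))"

definition fibre_slice :: "nat \<Rightarrow> nat \<Rightarrow> (nat \<Rightarrow> nat) set \<Rightarrow> (nat \<Rightarrow> nat) set" where
  "fibre_slice v y S = (\<lambda>m. m(v := 0)) ` {m\<in>S. m v = y}"

lemma eval_terms_cong:
  assumes "\<forall>i\<in>{1..n}. \<alpha> i = \<beta> i"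
  shows "eval_terms n S C \<alpha> = eval_terms n S C \<beta>"
  unfolding eval_terms_def using assms
  by (intro sum.cong refl arg_cong2[where f = "(*)"] prod.cong) auto

lemma eval_terms_Suc:
  assumes "finite S"
  shows "eval_terms (Suc n) S C \<alpha> =
    (\<Sum>y\<in>(\<lambda>m. m (Suc n)) ` S.
       eval_terms n (fibre_slice (Suc n) y S) (\<lambda>g. C (g(Suc n := y))) \<alpha> * \<alpha> (Suc n) ^ y)"
proof -
  let ?N = "Suc n"
  have inj: "inj_on (\<lambda>m. m(?N := 0)) {m\<in>S. m ?N = y}" for y
    by (rule inj_onI) (metis (mono_tags, lifting) fun_upd_idem_iff fun_upd_upd mem_Collect_eq)
  have slice: "eval_terms n (fibre_slice ?N y S) (\<lambda>g. C (g(?N := y))) \<alpha> =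
      (\<Sum>m\<in>{m\<in>S. m ?N = y}. C m * (\<Prod>i=1..n. \<alpha> i ^ m i))" for y
    unfolding eval_terms_def fibre_slice_def sum.reindex[OF inj]
    by (intro sum.cong refl arg_cong2[where f = "(*)"] prod.cong) auto
  have "eval_terms (Suc n) S C \<alpha> = (\<Sum>m\<in>S. C m * (\<Prod>i=1..n. \<alpha> i ^ m i) * \<alpha> ?N ^ m ?N)"
    by (simp add: eval_terms_def mult.assoc)
  also have "\<dots> = (\<Sum>y\<in>(\<lambda>m. m ?N) ` S. \<Sum>m\<in>{m\<in>S. m ?N = y}. C m * (\<Prod>i=1..n. \<alpha> i ^ m i) * \<alpha> ?N ^ m ?N)"
    by (rule sum.image_gen[OF assms])
  also have "\<dots> = (\<Sum>y\<in>(\<lambda>m. m ?N) ` S.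
      eval_terms n (fibre_slice ?N y S) (\<lambda>g. C (g(?N := y))) \<alpha> * \<alpha> ?N ^ y)"
    unfolding slice sum_distrib_right by (intro sum.cong refl) auto
  finally show ?thesis .
qed

lemma card_nonzero_on_line_ge:
  assumes "finite S" "m \<in> S" "C m \<noteq> 0" "\<forall>m'\<in>S. C m' \<noteq> 0 \<longrightarrow> m' (Suc n) \<le> m (Suc n)"
    and top:
      "eval_terms n (fibre_slice (Suc n) (m (Suc n)) S) (\<lambda>g. C (g(Suc n := m (Suc n)))) \<alpha> \<noteq> 0"
  shows "card B - m (Suc n) \<le> card {x\<in>B. eval_terms (Suc n) S C (\<alpha>(Suc n := x)) \<noteq> (0::'a::idom)}"
proof -
  define a where "a y = eval_terms n (fibre_slice (Suc n) y S) (\<lambda>g. C (g(Suc n := y))) \<alpha>" for y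
  have "a y = 0" if "m (Suc n) < y" for y
    unfolding a_def eval_terms_def fibre_slice_def
  proof (intro sum.neutral ballI)
    fix g assume "g \<in> (\<lambda>m. m(Suc n := 0)) ` {m'\<in>S. m' (Suc n) = y}"
    then obtain m' where "m' \<in> S" "m' (Suc n) = y" "g(Suc n := y) = m'"
      by auto
    with assms(4) that show "C (g(Suc n := y)) * (\<Prod>i=1..n. \<alpha> i ^ g i) = 0"
      by auto
  qed
  then have "card B - m (Suc n) \<le> card {x\<in>B. (\<Sum>y\<in>(\<lambda>m. m (Suc n)) ` S. a y * x ^ y) \<noteq> 0}"
    using assms(1,2) top by (intro card_nonroots_ge) (auto simp: a_def)
  moreover have
    "eval_terms (Suc n) S C (\<alpha>(Suc n := x)) = (\<Sum>y\<in>(\<lambda>m. m (Suc n)) ` S. a y * x ^ y)" for x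
    unfolding eval_terms_Suc[OF assms(1)] a_def
    by (intro sum.cong refl) (simp add: eval_terms_cong[of n "\<alpha>(Suc n := x)" \<alpha>])
  ultimately show ?thesis
    by simp
qed

text \<open>The monomial provided is the leading one for the lexicographic order with \<open>X\<^sub>n\<close> most
  significant.\<close>

lemma footprint_bound:
  fixes K :: "nat \<Rightarrow> 'a::idom set"
  assumes "\<forall>i\<in>{1..n}. finite (K i)" "finite S"
    and "\<forall>m\<in>S. \<forall>i\<in>{1..n}. m i < card (K i)" "\<forall>m\<in>S. \<forall>i. i \<notin> {1..n} \<longrightarrow> m i = 0"
    and "\<exists>m\<in>S. C m \<noteq> 0"
  shows "\<exists>m\<in>S. C m \<noteq> 0 \<and>
    (\<Prod>i=1..n. card (K i) - m i) \<le> card {\<alpha> \<in> PiE {1..n} K. eval_terms n S C \<alpha> \<noteq> 0}"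
  using assms
proof (induction n arbitrary: S C)
  case 0
  then obtain m where m: "m \<in> S" "C m \<noteq> 0"
    by blast
  have "m' = m" if "m' \<in> S" for m'
  proof
    fix i show "m' i = m i"
      using 0(4)[rule_format, OF that, of i] 0(4)[rule_format, OF m(1), of i] by simp
  qed
  with m(1) have "S = {m}"
    by blast
  with m show ?case
    by (simp add: eval_terms_def)
next
  case (Suc n)
  let ?N = "Suc n"
  define Z where "Z = {m\<in>S. C m \<noteq> 0}"
  define e where "e = Max ((\<lambda>m. m ?N) ` Z)"
  have "finite Z" "Z \<noteq> {}"
    using Suc.prems(2,5) by (auto simp: Z_def)
  then have e_max: "\<forall>m\<in>S. C m \<noteq> 0 \<longrightarrow> m ?N \<le> e" and "e \<in> (\<lambda>m. m ?N) ` Z"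
    by (auto simp: e_def Z_def)
  then obtain m0 where "m0 \<in> S" "C m0 \<noteq> 0" "m0 ?N = e"
    by (auto simp: Z_def)
  define S' where "S' = fibre_slice ?N e S"
  define C' where "C' = (\<lambda>g. C (g(?N := e)))"
  have "\<exists>g\<in>S'. C' g \<noteq> 0 \<and>
      (\<Prod>i=1..n. card (K i) - g i) \<le> card {\<alpha> \<in> PiE {1..n} K. eval_terms n S' C' \<alpha> \<noteq> 0}"
  proof (rule Suc.IH)
    show "\<exists>g\<in>S'. C' g \<noteq> 0"
      using \<open>m0 \<in> S\<close> \<open>C m0 \<noteq> 0\<close> \<open>m0 ?N = e\<close>
      by (intro bexI[of _ "m0(?N := 0)"]) (auto simp: C'_def S'_def fibre_slice_def)
  qed (use Suc.prems in \<open>auto simp: S'_def fibre_slice_def\<close>)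
  then obtain g where "g \<in> S'" "C' g \<noteq> 0"
    and IH: "(\<Prod>i=1..n. card (K i) - g i) \<le> card {\<alpha> \<in> PiE {1..n} K. eval_terms n S' C' \<alpha> \<noteq> 0}"
    by blast
  then obtain m where m: "m \<in> S" "m ?N = e" "g = m(?N := 0)"
    by (auto simp: S'_def fibre_slice_def)
  with \<open>C' g \<noteq> 0\<close> have "C m \<noteq> 0"
    by (simp add: C'_def fun_upd_idem)
  have "(\<Prod>i=1..?N. card (K i) - m i) = (\<Prod>i=1..n. card (K i) - g i) * (card (K ?N) - e)"
  proof -
    have "(\<Prod>i=1..n. card (K i) - m i) = (\<Prod>i=1..n. card (K i) - g i)"
      using m(3) by (intro prod.cong) auto
    then show ?thesis
      using m(2) by (simp add: prod.cl_ivl_Suc)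
  qed
  also have "\<dots> \<le> card {\<alpha> \<in> PiE {1..n} K. eval_terms n S' C' \<alpha> \<noteq> 0} * (card (K ?N) - e)"
    using IH by (rule mult_right_mono) simp
  also have "\<dots> \<le> card {\<alpha> \<in> PiE {1..?N} K. eval_terms ?N S C \<alpha> \<noteq> 0}"
  proof (rule card_PiE_Suc_ge)
    fix \<alpha> assume "\<alpha> \<in> {\<alpha> \<in> PiE {1..n} K. eval_terms n S' C' \<alpha> \<noteq> 0}"
    with m \<open>C m \<noteq> 0\<close> e_max Suc.prems(2) show
      "card (K ?N) - e \<le> card {x \<in> K ?N. eval_terms ?N S C (\<alpha>(?N := x)) \<noteq> 0}"
      using card_nonzero_on_line_ge[of S m C n \<alpha> "K ?N"] by (simp add: S'_def C'_def)
  qed (use Suc.prems(1) in auto)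
  finally show ?case
    using \<open>m \<in> S\<close> \<open>C m \<noteq> 0\<close> by blast
qed

section \<open>Boxes of minimal volume\<close>

lemma (in comm_monoid_set) atLeast1_atMost_Suc_shift:
  "F g {1..Suc n} = g 1 \<^bold>* F (\<lambda>i. g (Suc i)) {1..n}"
  by (simp add: atLeast_Suc_atMost assoc flip: shift_bounds_cl_Suc_ivl)

text \<open>Equivalently \<open>(y - r) (e - y) \<ge> 0\<close>, as \<open>y (e - (y - r)) - r e = (y - r) (e - y)\<close>.\<close>

lemma exchange_mult_le:
  fixes r y e :: nat
  assumes "r \<le> y" "y \<le> e"
  shows "r * e \<le> y * (e - (y - r))"
    and "r * e = y * (e - (y - r)) \<Longrightarrow> y = r \<or> y = e"
proof -
  obtain a b where "y = r + a" "e = y + b"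
    using assms le_iff_add by metis
  then show "r * e \<le> y * (e - (y - r))" "r * e = y * (e - (y - r)) \<Longrightarrow> y = r \<or> y = e"
    by (simp_all add: algebra_simps)
qed

text \<open>Side lengths \<open>x v\<close> stand for \<open>d v - e v\<close>, where \<open>e\<close> is an exponent vector; the extremal
  boxes are those of the monomials in the conclusion of the theorem.\<close>

definition extremal_box :: "(nat \<Rightarrow> nat) \<Rightarrow> (nat \<Rightarrow> nat) \<Rightarrow> nat \<Rightarrow> nat \<Rightarrow> nat \<Rightarrow> bool" where
  "extremal_box d x n k r \<longleftrightarrow>
     (\<exists>j\<in>{1..k+1}. r \<le> d j \<and> (\<exists>t. inj_on t {1..k+1} \<and> t ` {1..k+1} \<subseteq> {1..n} \<and>
        (\<forall>i\<in>{1..k+1}. d (t i) = d i) \<and> x (t j) = r \<and>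
        (\<forall>i\<in>{1..k+1}. i \<noteq> j \<longrightarrow> x (t i) = 1) \<and>
        (\<forall>v\<in>{1..n} - t ` {1..k+1}. x v = d v)))"

lemma extremal_boxI:
  assumes "j \<in> {1..k+1}" "r \<le> d j" "inj_on t {1..k+1}" "t ` {1..k+1} \<subseteq> {1..n}"
    "\<forall>i\<in>{1..k+1}. d (t i) = d i" "x (t j) = r" "\<forall>i\<in>{1..k+1}. i \<noteq> j \<longrightarrow> x (t i) = 1"
    "\<forall>v\<in>{1..n} - t ` {1..k+1}. x v = d v"
  shows "extremal_box d x n k r"
  unfolding extremal_box_def using assms by blast

lemma extremal_box_first:
  assumes "r \<le> d 1" "x 1 = r" "\<forall>v\<in>{1..n}. x (Suc v) = d (Suc v)"
  shows "extremal_box d x (Suc n) 0 r"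
proof (rule extremal_boxI[where j = 1 and t = "\<lambda>_. 1"])
  show "\<forall>v\<in>{1..Suc n} - (\<lambda>_. 1) ` {1..0+1::nat}. x v = d v"
  proof
    fix v assume "v \<in> {1..Suc n} - (\<lambda>_. 1) ` {1..0+1::nat}"
    then have "v \<in> {2..Suc n}"
      by auto
    then obtain u where "v = Suc u" "u \<in> {1..n}"
      by (cases v) auto
    with assms(3) show "x v = d v" by simp
  qed
qed (use assms in auto)

lemma extremal_box_full:
  assumes "extremal_box d x n 0 (d 1)"
  shows "\<forall>v\<in>{1..n}. x v = d v"
  using assms unfolding extremal_box_def by force

lemma extremal_box_shift:
  assumes "extremal_box (\<lambda>i. d (Suc i)) (\<lambda>i. x (Suc i)) n k r"
    and "x 1 = d 1" "\<forall>i\<in>{1..k+1}. d (Suc i) = d i"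
  shows "extremal_box d x (Suc n) k r"
proof -
  obtain j t where j: "j \<in> {1..k+1}" "r \<le> d (Suc j)"
    and t: "inj_on t {1..k+1}" "t ` {1..k+1} \<subseteq> {1..n}"
      "\<forall>i\<in>{1..k+1}. d (Suc (t i)) = d (Suc i)" "x (Suc (t j)) = r"
      "\<forall>i\<in>{1..k+1}. i \<noteq> j \<longrightarrow> x (Suc (t i)) = 1"
      "\<forall>v\<in>{1..n} - t ` {1..k+1}. x (Suc v) = d (Suc v)"
    using assms(1) unfolding extremal_box_def by blast
  show ?thesis
  proof (rule extremal_boxI[where j = j and t = "\<lambda>i. Suc (t i)"])
    show "inj_on (\<lambda>i. Suc (t i)) {1..k+1}"
      using t(1) by (simp add: inj_on_def)
    show "\<forall>v\<in>{1..Suc n} - (\<lambda>i. Suc (t i)) ` {1..k+1}. x v = d v"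
    proof
      fix v assume v: "v \<in> {1..Suc n} - (\<lambda>i. Suc (t i)) ` {1..k+1}"
      show "x v = d v"
      proof (cases v)
        case (Suc u)
        with v have "u \<in> {1..n} - t ` {1..k+1} \<or> u = 0" by auto
        with Suc t(6) assms(2) show ?thesis by auto
      qed (use v in auto)
    qed
  qed (use j t assms(3) in auto)
qed

lemma atLeast1_atMost_Suc_eq_insert_1: "{1..Suc m} = insert 1 (Suc ` {1..m})"
proof -
  have "{1..Suc m} = insert 1 {Suc 1..Suc m}"
    by auto
  then show ?thesis
    by (simp only: image_Suc_atLeastAtMost)
qed

lemma ball_atLeast1_atMost_Suc:
  "(\<forall>i\<in>{1..Suc m}. P i) \<longleftrightarrow> P 1 \<and> (\<forall>i\<in>{1..m}. P (Suc i))"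
  unfolding atLeast1_atMost_Suc_eq_insert_1 by (simp del: image_Suc_atLeastAtMost)

definition cons_shift :: "(nat \<Rightarrow> nat) \<Rightarrow> nat \<Rightarrow> nat" where
  "cons_shift t i = (if i = 1 then 1 else Suc (t (i - 1)))"

lemma image_cons_shift:
  "cons_shift t ` {1..Suc m} = insert 1 ((\<lambda>i. Suc (t i)) ` {1..m})"
proof -
  have "cons_shift t ` Suc ` {1..m} = (\<lambda>i. Suc (t i)) ` {1..m}"
    unfolding image_image by (rule image_cong) (simp_all add: cons_shift_def)
  then show ?thesis
    unfolding atLeast1_atMost_Suc_eq_insert_1 image_insert by (simp add: cons_shift_def)
qed

lemma inj_on_cons_shift:
  assumes "inj_on t {1..m}" "0 \<notin> t ` {1..m}"
  shows "inj_on (cons_shift t) {1..Suc m}"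
  unfolding atLeast1_atMost_Suc_eq_insert_1
proof (rule inj_on_insert[THEN iffD2], intro conjI)
  show "inj_on (cons_shift t) (Suc ` {1..m})"
  proof (rule inj_onI)
    fix a b assume "a \<in> Suc ` {1..m}" "b \<in> Suc ` {1..m}" and eq: "cons_shift t a = cons_shift t b"
    then obtain a' b' where ab: "a = Suc a'" "b = Suc b'" and "a' \<in> {1..m}" "b' \<in> {1..m}"
      by blast
    moreover from this eq have "t a' = t b'"
      by (simp add: cons_shift_def)
    ultimately show "a = b"
      using assms(1) by (simp add: inj_onD)
  qed
  show "cons_shift t 1 \<notin> cons_shift t ` (Suc ` {1..m} - {1})"
  proof
    assume "cons_shift t 1 \<in> cons_shift t ` (Suc ` {1..m} - {1})"
    then obtain a where a: "a \<in> Suc ` {1..m}" "cons_shift t 1 = cons_shift t a"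
      by blast
    then obtain i where "i \<in> {1..m}" "a = Suc i"
      by blast
    with a have "t i = 0"
      by (simp add: cons_shift_def)
    with \<open>i \<in> {1..m}\<close> assms(2) show False
      by (metis image_eqI)
  qed
qed

lemma extremal_box_cons:
  assumes "extremal_box (\<lambda>i. d (Suc i)) (\<lambda>i. x (Suc i)) n k r'"
    and "x 1 = 1 \<and> r' = r \<or> x 1 = r \<and> r' = 1 \<and> r \<le> d 1"
  shows "extremal_box d x (Suc n) (Suc k) r"
proof -
  obtain j t where j: "j \<in> {1..k+1}" "r' \<le> d (Suc j)"
    and t: "inj_on t {1..k+1}" "t ` {1..k+1} \<subseteq> {1..n}"
      "\<forall>i\<in>{1..k+1}. d (Suc (t i)) = d (Suc i)" "x (Suc (t j)) = r'"
      "\<forall>i\<in>{1..k+1}. i \<noteq> j \<longrightarrow> x (Suc (t i)) = 1"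
      "\<forall>v\<in>{1..n} - t ` {1..k+1}. x (Suc v) = d (Suc v)"
    using assms(1) unfolding extremal_box_def by blast
  let ?t = "cons_shift t"
  have dom: "{1..Suc k + 1} = {1..Suc (k+1)}"
    by simp
  have image: "?t ` {1..Suc k + 1} = insert 1 ((\<lambda>i. Suc (t i)) ` {1..k+1})"
    unfolding dom by (rule image_cons_shift)
  have "0 \<notin> t ` {1..k+1}"
    using t(2) by auto
  with t(1) have inj: "inj_on ?t {1..Suc k + 1}"
    unfolding dom by (rule inj_on_cons_shift)
  have sub: "?t ` {1..Suc k + 1} \<subseteq> {1..Suc n}"
    using t(2) unfolding image by auto
  have deg: "\<forall>i\<in>{1..Suc k + 1}. d (?t i) = d i"
    using t(3) unfolding dom ball_atLeast1_atMost_Suc by (simp add: cons_shift_def)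
  have rest: "\<forall>v\<in>{1..Suc n} - ?t ` {1..Suc k + 1}. x v = d v"
  proof
    fix v assume "v \<in> {1..Suc n} - ?t ` {1..Suc k + 1}"
    then obtain u where "v = Suc u" "u \<in> {1..n} - t ` {1..k+1}"
      unfolding image by (cases v) (auto simp: image_iff)
    with t(6) show "x v = d v" by simp
  qed
  have ones: "\<forall>i\<in>{1..Suc k + 1}. i \<noteq> 1 \<and> i \<noteq> Suc j \<longrightarrow> x (?t i) = 1"
    using t(5) unfolding dom ball_atLeast1_atMost_Suc by (simp add: cons_shift_def)
  have at_j: "x (?t (Suc j)) = r'"
    using t(4) j(1) by (simp add: cons_shift_def)
  have "?t 1 = 1"
    by (simp add: cons_shift_def)
  from assms(2) show ?thesis
  proof
    assume "x 1 = 1 \<and> r' = r"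
    with ones \<open>?t 1 = 1\<close> have "\<forall>i\<in>{1..Suc k + 1}. i \<noteq> Suc j \<longrightarrow> x (?t i) = 1"
      by metis
    with j at_j \<open>x 1 = 1 \<and> r' = r\<close> show ?thesis
      by (intro extremal_boxI[OF _ _ inj sub deg _ _ rest, where j = "Suc j"]) simp_all
  next
    assume "x 1 = r \<and> r' = 1 \<and> r \<le> d 1"
    with ones at_j j(1) have "\<forall>i\<in>{1..Suc k + 1}. i \<noteq> 1 \<longrightarrow> x (?t i) = 1"
      by metis
    with \<open>?t 1 = 1\<close> \<open>x 1 = r \<and> r' = 1 \<and> r \<le> d 1\<close> show ?thesis
      by (intro extremal_boxI[OF _ _ inj sub deg _ _ rest, where j = 1]) simp_all
  qed
qed

text \<open>Bound and equality case together, as the equality case of the induction step needs the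
  bound for the remaining coordinates.\<close>

definition box_prod_bound :: "(nat \<Rightarrow> nat) \<Rightarrow> (nat \<Rightarrow> nat) \<Rightarrow> nat \<Rightarrow> nat \<Rightarrow> nat \<Rightarrow> bool" where
  "box_prod_bound d x n k r \<longleftrightarrow>
     r * (\<Prod>i=k+2..n. d i) \<le> (\<Prod>v=1..n. x v) \<and>
     ((\<Prod>v=1..n. x v) = r * (\<Prod>i=k+2..n. d i) \<longrightarrow> extremal_box d x n k r)"

lemma box_prod_bound_step:
  assumes IH: "box_prod_bound (\<lambda>i. d (Suc i)) (\<lambda>i. x (Suc i)) n k' r'"
    and box: "\<forall>v\<in>{1..Suc n}. 1 \<le> x v \<and> x v \<le> d v"
    and split: "(\<Prod>i=k+2..Suc n. d i) = e * (\<Prod>i=k'+2..n. d (Suc i))"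
    and exch: "r * e \<le> x 1 * r'"
    and shape: "r * e = x 1 * r' \<Longrightarrow> extremal_box (\<lambda>i. d (Suc i)) (\<lambda>i. x (Suc i)) n k' r'
                  \<Longrightarrow> extremal_box d x (Suc n) k r"
  shows "box_prod_bound d x (Suc n) k r"
proof -
  define A where "A = (\<Prod>v=1..n. x (Suc v))"
  define Q where "Q = (\<Prod>i=k'+2..n. d (Suc i))"
  have prod_x: "(\<Prod>v=1..Suc n. x v) = x 1 * A"
    unfolding A_def by (rule prod.atLeast1_atMost_Suc_shift)
  have "0 < x 1"
    using box[rule_format, of 1] by simp
  have d_pos: "0 < d v" if "v \<in> {1..Suc n}" for v
    using box that by fastforce
  have "0 < Q"
    unfolding Q_def by (intro prod_pos d_pos) auto
  from IH have IH_le: "r' * Q \<le> A" and IH_eq: "A = r' * Q \<Longrightarrow>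
      extremal_box (\<lambda>i. d (Suc i)) (\<lambda>i. x (Suc i)) n k' r'"
    by (simp_all add: box_prod_bound_def A_def Q_def)
  have lower: "r * e * Q \<le> x 1 * r' * Q"
    using exch by simp
  have upper: "x 1 * r' * Q \<le> x 1 * A"
    using IH_le by (simp add: mult.assoc)
  have "extremal_box d x (Suc n) k r" if eq: "x 1 * A = r * e * Q"
  proof -
    have "r * e * Q = x 1 * r' * Q" and "x 1 * r' * Q = x 1 * A"
      using lower upper eq by linarith+
    with \<open>0 < Q\<close> \<open>0 < x 1\<close> have "r * e = x 1 * r'" and "A = r' * Q"
      by (simp_all add: mult.assoc)
    with shape IH_eq show ?thesis by blast
  qed
  moreover have "r * e * Q \<le> x 1 * A"
    using lower upper by (rule order_trans)
  ultimately show ?thesis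
    unfolding box_prod_bound_def prod_x split Q_def[symmetric] by (simp add: mult.assoc)
qed

lemma box_prod_bound_1:
  assumes "r \<le> x 1" "x 1 \<le> d 1"
  shows "box_prod_bound d x 1 0 r"
  using assms extremal_box_first[of r d x 0] by (simp add: box_prod_bound_def)

lemma box_prod_bound_Suc_last:
  assumes "\<forall>v\<in>{1..Suc n}. 1 \<le> x v" "r < x 1"
  shows "box_prod_bound d x (Suc n) n r"
proof -
  have "1 \<le> (\<Prod>v=1..n. x (Suc v))"
    using assms(1) by (intro prod_ge_1) auto
  then have "x 1 \<le> (\<Prod>v=1..Suc n. x v)"
    unfolding prod.atLeast1_atMost_Suc_shift by simp
  with assms(2) show ?thesis
    by (simp add: box_prod_bound_def)
qed

lemma prod_atLeast_add2_Suc_split: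
  fixes d :: "nat \<Rightarrow> nat"
  assumes "k < n"
  shows "(\<Prod>i=k+2..Suc n. d i) = d (k+2) * (\<Prod>i=k+2..n. d (Suc i))"
proof -
  have "(\<Prod>i=k+2..Suc n. d i) = (\<Prod>i=k+1..n. d (Suc i))"
    by (simp flip: prod.shift_bounds_cl_Suc_ivl)
  also have "\<dots> = d (k+2) * (\<Prod>i=k+2..n. d (Suc i))"
    using assms by (simp add: prod.atLeast_Suc_atMost)
  finally show ?thesis .
qed

lemma mono_on_Suc_eq_if_flat:
  fixes d :: "nat \<Rightarrow> nat"
  assumes "mono_on {1..N} d" "Suc b \<le> N" "d (Suc b) \<le> d 1"
  shows "\<forall>i\<in>{1..b}. d (Suc i) = d i"
proof
  fix i assume "i \<in> {1..b}"
  with assms have "d 1 \<le> d i" "d i \<le> d (Suc i)" "d (Suc i) \<le> d (Suc b)"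
    by (auto intro!: mono_onD[OF assms(1)])
  with assms(3) show "d (Suc i) = d i"
    by simp
qed

lemma box_prod_bound_Suc_first_ge:
  assumes IH: "box_prod_bound (\<lambda>i. d (Suc i)) (\<lambda>i. x (Suc i)) n k (d (k+2) - (x 1 - r))"
    and box: "\<forall>v\<in>{1..Suc n}. 1 \<le> x v \<and> x v \<le> d v"
    and mono: "mono_on {1..Suc n} d"
    and "k < n" "r \<le> x 1" "x 1 = r \<Longrightarrow> k = 0"
  shows "box_prod_bound d x (Suc n) k r"
proof (rule box_prod_bound_step[OF IH box prod_atLeast_add2_Suc_split[OF \<open>k < n\<close>]])
  have "x 1 \<le> d 1"
    using box by force
  also have "d 1 \<le> d (k+2)"
    using \<open>k < n\<close> by (intro mono_onD[OF mono]) auto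
  finally have "x 1 \<le> d (k+2)" .
  note exchange = exchange_mult_le[OF \<open>r \<le> x 1\<close> this]
  show "r * d (k+2) \<le> x 1 * (d (k+2) - (x 1 - r))"
    by (rule exchange(1))
  assume eq: "r * d (k+2) = x 1 * (d (k+2) - (x 1 - r))"
    and shape: "extremal_box (\<lambda>i. d (Suc i)) (\<lambda>i. x (Suc i)) n k (d (k+2) - (x 1 - r))"
  from exchange(2)[OF eq] show "extremal_box d x (Suc n) k r"
  proof
    assume "x 1 = r"
    with assms(6) have "k = 0" .
    with shape \<open>x 1 = r\<close> have "extremal_box (\<lambda>i. d (Suc i)) (\<lambda>i. x (Suc i)) n 0 (d (Suc 1))"
      by simp
    then have "\<forall>v\<in>{1..n}. x (Suc v) = d (Suc v)"
      by (rule extremal_box_full)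
    with \<open>x 1 = r\<close> \<open>x 1 \<le> d 1\<close> \<open>k = 0\<close> show ?thesis
      by (simp add: extremal_box_first)
  next
    assume "x 1 = d (k+2)"
    with \<open>x 1 \<le> d 1\<close> have "d (Suc (k+1)) \<le> d 1"
      by simp
    with mono \<open>k < n\<close> have "\<forall>i\<in>{1..k+1}. d (Suc i) = d i"
      by (intro mono_on_Suc_eq_if_flat) auto
    moreover have "x 1 = d 1"
      using \<open>x 1 = d (k+2)\<close> \<open>x 1 \<le> d 1\<close> \<open>d 1 \<le> d (k+2)\<close> by simp
    moreover have "d (k+2) - (x 1 - r) = r"
      using \<open>x 1 = d (k+2)\<close> \<open>r \<le> x 1\<close> by simp
    with shape have "extremal_box (\<lambda>i. d (Suc i)) (\<lambda>i. x (Suc i)) n k r"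
      by simp
    ultimately show ?thesis
      by (intro extremal_box_shift)
  qed
qed

lemma box_prod_bound_Suc_first_le:
  assumes IH: "box_prod_bound (\<lambda>i. d (Suc i)) (\<lambda>i. x (Suc i)) n k (r + 1 - x 1)"
    and box: "\<forall>v\<in>{1..Suc n}. 1 \<le> x v \<and> x v \<le> d v"
    and "x 1 \<le> r"
  shows "box_prod_bound d x (Suc n) (Suc k) r"
proof (rule box_prod_bound_step[OF IH box, where e = 1])
  show "(\<Prod>i=Suc k+2..Suc n. d i) = 1 * (\<Prod>i=k+2..n. d (Suc i))"
    by (simp flip: prod.shift_bounds_cl_Suc_ivl)
  have "1 \<le> x 1" "x 1 \<le> d 1"
    using box by force+
  note exchange = exchange_mult_le[OF \<open>1 \<le> x 1\<close> \<open>x 1 \<le> r\<close>]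
  have r': "r - (x 1 - 1) = r + 1 - x 1"
    using \<open>1 \<le> x 1\<close> \<open>x 1 \<le> r\<close> by simp
  show "r * 1 \<le> x 1 * (r + 1 - x 1)"
    using exchange(1) r' by simp
  assume "r * 1 = x 1 * (r + 1 - x 1)"
    and shape: "extremal_box (\<lambda>i. d (Suc i)) (\<lambda>i. x (Suc i)) n k (r + 1 - x 1)"
  with exchange(2) r' have "x 1 = 1 \<or> x 1 = r"
    by simp
  with \<open>x 1 \<le> d 1\<close> show "extremal_box d x (Suc n) (Suc k) r"
    by (intro extremal_box_cons[OF shape]) auto
qed

definition within_budget :: "(nat \<Rightarrow> nat) \<Rightarrow> (nat \<Rightarrow> nat) \<Rightarrow> nat \<Rightarrow> nat \<Rightarrow> nat \<Rightarrow> bool" where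
  "within_budget d x n k r \<longleftrightarrow> (\<Sum>v=1..n. d v - x v) \<le> (\<Sum>i=1..k. d i - 1) + (d (k+1) - r)"

lemma within_budget_Suc:
  "within_budget d x (Suc n) k r \<longleftrightarrow>
     d 1 - x 1 + (\<Sum>v=1..n. d (Suc v) - x (Suc v)) \<le> (\<Sum>i=1..k. d i - 1) + (d (k+1) - r)"
  unfolding within_budget_def sum.atLeast1_atMost_Suc_shift ..

lemma box_prod_bound_within_budget_Suc_0:
  assumes IH: "\<And>k' r'. k' < n \<Longrightarrow> 1 \<le> r' \<Longrightarrow> r' \<le> d (k'+2) \<Longrightarrow>
      within_budget (\<lambda>i. d (Suc i)) (\<lambda>i. x (Suc i)) n k' r' \<Longrightarrow>
      box_prod_bound (\<lambda>i. d (Suc i)) (\<lambda>i. x (Suc i)) n k' r'"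
    and mono: "mono_on {1..Suc n} d" and box: "\<forall>v\<in>{1..Suc n}. 1 \<le> x v \<and> x v \<le> d v"
    and "1 \<le> r" "r \<le> d 1" "within_budget d x (Suc n) 0 r"
  shows "box_prod_bound d x (Suc n) 0 r"
proof -
  define S where "S = (\<Sum>v=1..n. d (Suc v) - x (Suc v))"
  have "x 1 \<le> d 1"
    using box by force
  with assms(4-6) have "r + S \<le> x 1"
    by (simp add: within_budget_Suc S_def)
  show ?thesis
  proof (cases n)
    case 0
    with \<open>r + S \<le> x 1\<close> \<open>x 1 \<le> d 1\<close> show ?thesis
      using box_prod_bound_1[of r x d] by simp
  next
    case (Suc n')
    with mono have "d 1 \<le> d (0+2)"
      by (auto simp: mono_on_def)
    with Suc \<open>r + S \<le> x 1\<close> \<open>x 1 \<le> d 1\<close> \<open>1 \<le> r\<close>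
    have "box_prod_bound (\<lambda>i. d (Suc i)) (\<lambda>i. x (Suc i)) n 0 (d (0+2) - (x 1 - r))"
      by (intro IH) (auto simp: within_budget_def S_def numeral_2_eq_2)
    with box mono Suc \<open>r + S \<le> x 1\<close> show ?thesis
      by (intro box_prod_bound_Suc_first_ge) auto
  qed
qed

lemma box_prod_bound_within_budget_Suc_Suc:
  assumes IH: "\<And>k' r'. k' < n \<Longrightarrow> 1 \<le> r' \<Longrightarrow> r' \<le> d (k'+2) \<Longrightarrow>
      within_budget (\<lambda>i. d (Suc i)) (\<lambda>i. x (Suc i)) n k' r' \<Longrightarrow>
      box_prod_bound (\<lambda>i. d (Suc i)) (\<lambda>i. x (Suc i)) n k' r'"
    and mono: "mono_on {1..Suc n} d" and box: "\<forall>v\<in>{1..Suc n}. 1 \<le> x v \<and> x v \<le> d v"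
    and "k < n" "1 \<le> r" "r \<le> d (k+2)" "within_budget d x (Suc n) (Suc k) r"
  shows "box_prod_bound d x (Suc n) (Suc k) r"
proof -
  define S where "S = (\<Sum>v=1..n. d (Suc v) - x (Suc v))"
  define T where "T = (\<Sum>i=1..k. d (Suc i) - 1)"
  have "1 \<le> x 1" "x 1 \<le> d 1"
    using box by force+
  moreover have "(\<Sum>i=1..Suc k. d i - 1) = d 1 - 1 + T"
    unfolding T_def sum.atLeast1_atMost_Suc_shift ..
  ultimately have budget: "S \<le> T + (d (k+2) - r) + (x 1 - 1)"
    using assms(7) by (simp add: within_budget_Suc S_def)
  show ?thesis
  proof (cases "x 1 \<le> r")
    case True
    with budget assms(4-6) \<open>1 \<le> x 1\<close>
    have "box_prod_bound (\<lambda>i. d (Suc i)) (\<lambda>i. x (Suc i)) n k (r + 1 - x 1)"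
      by (intro IH) (auto simp: within_budget_def S_def T_def)
    then show ?thesis
      using box True by (rule box_prod_bound_Suc_first_le)
  next
    case False
    show ?thesis
    proof (cases "Suc k < n")
      case True
      with mono have "d 1 \<le> d (k+3)"
        by (auto simp: mono_on_def)
      have "(\<Sum>i=1..Suc k. d (Suc i) - 1) = T + (d (k+2) - 1)"
        by (simp add: T_def)
      with budget False True assms(5,6) \<open>x 1 \<le> d 1\<close> \<open>d 1 \<le> d (k+3)\<close>
      have "box_prod_bound (\<lambda>i. d (Suc i)) (\<lambda>i. x (Suc i)) n (Suc k) (d (Suc k+2) - (x 1 - r))"
        by (intro IH) (auto simp: within_budget_def S_def numeral_3_eq_3)
      with box mono True False show ?thesis
        by (intro box_prod_bound_Suc_first_ge) auto
    next
      case False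
      with assms(4) have "Suc k = n" by simp
      with box \<open>\<not> x 1 \<le> r\<close> show ?thesis
        using box_prod_bound_Suc_last[of n x r d] by simp
    qed
  qed
qed

lemma box_prod_bound_within_budget:
  assumes "mono_on {1..n} d" "\<forall>v\<in>{1..n}. 1 \<le> x v \<and> x v \<le> d v"
    and "k < n" "1 \<le> r" "r \<le> d (k+1)" "within_budget d x n k r"
  shows "box_prod_bound d x n k r"
  using assms
proof (induction n arbitrary: d x k r)
  case 0
  then show ?case by simp
next
  case (Suc n)
  have IH: "box_prod_bound (\<lambda>i. d (Suc i)) (\<lambda>i. x (Suc i)) n k' r'"
    if "k' < n" "1 \<le> r'" "r' \<le> d (k'+2)" "within_budget (\<lambda>i. d (Suc i)) (\<lambda>i. x (Suc i)) n k' r'"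
    for k' r'
    using Suc.IH[OF _ _ that(1,2)] that(3,4) Suc.prems(1,2) by (auto simp: mono_on_def)
  show ?case
  proof (cases k)
    case 0
    with Suc.prems show ?thesis
      using box_prod_bound_within_budget_Suc_0[OF IH, of r] by simp
  next
    case (Suc k')
    with Suc.prems show ?thesis
      using box_prod_bound_within_budget_Suc_Suc[OF IH, of k' r] by simp
  qed
qed

section \<open>Monomials of polynomials of minimum weight\<close>

lemma chain_subset:
  assumes "\<forall>i\<in>{1..<n}. K i \<subseteq> K (Suc i)" "1 \<le> a" "a \<le> b" "b \<le> n"
  shows "K a \<subseteq> K b"
  by (rule lift_Suc_mono_le_ivl[where N = "{1..<n}"]) (use assms in auto)

lemma chain_card_mono:
  assumes "\<forall>i\<in>{1..<n}. K i \<subseteq> K (Suc i)" "\<forall>i\<in>{1..n}. finite (K i)"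
  shows "mono_on {1..n} (\<lambda>i. card (K i))"
  using assms chain_subset[OF assms(1)] by (auto simp: mono_on_def intro!: card_mono)

lemma chain_eq_if_card_eq:
  assumes "\<forall>i\<in>{1..<n}. K i \<subseteq> K (Suc i)" "\<forall>i\<in>{1..n}. finite (K i)"
    and "a \<in> {1..n}" "b \<in> {1..n}" "card (K a) = card (K b)"
  shows "K a = K b"
proof (cases "a \<le> b")
  case True
  with assms show ?thesis
    using chain_subset[OF assms(1), of a b] card_subset_eq[of "K b" "K a"] by auto
next
  case False
  with assms show ?thesis
    using chain_subset[OF assms(1), of b a] card_subset_eq[of "K a" "K b"] by auto
qed

lemma lookup_sum_single_inj_on:
  assumes "inj_on t A" "finite A" "i \<in> A"
  shows "Poly_Mapping.lookup (\<Sum>i'\<in>A. Poly_Mapping.single (t i') (e i')) (t i) = e i"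
proof -
  have "(\<Sum>i'\<in>A. Poly_Mapping.lookup (Poly_Mapping.single (t i') (e i')) (t i)) =
      (\<Sum>i'\<in>A. if i' = i then e i' else 0)"
    using assms by (intro sum.cong refl) (auto simp: lookup_single inj_on_eq_iff)
  with assms(2,3) show ?thesis
    by (simp add: lookup_sum sum.delta)
qed

lemma lookup_sum_single_notin:
  assumes "v \<notin> t ` A"
  shows "Poly_Mapping.lookup (\<Sum>i\<in>A. Poly_Mapping.single (t i) (e i)) v = 0"
  unfolding lookup_sum using assms by (intro sum.neutral) (auto simp: lookup_single)

lemma monomial_of_extremal_box:
  assumes box: "extremal_box d (\<lambda>v. d v - Poly_Mapping.lookup m v) n k r"
    and "\<forall>v\<in>{1..n}. Poly_Mapping.lookup m v < d v" "Poly_Mapping.keys m \<subseteq> {1..n}"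
  shows "\<exists>j\<in>{1..k+1}. r \<le> d j \<and> (\<exists>t. inj_on t {1..k+1} \<and> t ` {1..k+1} \<subseteq> {1..n} \<and>
           (\<forall>i\<in>{1..k+1}. d (t i) = d i) \<and>
           m = (\<Sum>i\<in>{1..k+1}. Poly_Mapping.single (t i) (if i = j then d j - r else d i - 1)))"
proof -
  obtain j t where j: "j \<in> {1..k+1}" "r \<le> d j"
    and t: "inj_on t {1..k+1}" "t ` {1..k+1} \<subseteq> {1..n}" "\<forall>i\<in>{1..k+1}. d (t i) = d i"
      "d (t j) - Poly_Mapping.lookup m (t j) = r"
      "\<forall>i\<in>{1..k+1}. i \<noteq> j \<longrightarrow> d (t i) - Poly_Mapping.lookup m (t i) = 1"
      "\<forall>v\<in>{1..n} - t ` {1..k+1}. d v - Poly_Mapping.lookup m v = d v"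
    using box unfolding extremal_box_def by blast
  define e where "e i = (if i = j then d j - r else d i - 1)" for i
  have "m = (\<Sum>i\<in>{1..k+1}. Poly_Mapping.single (t i) (e i))"
  proof (rule poly_mapping_eqI)
    fix v
    show "Poly_Mapping.lookup m v =
        Poly_Mapping.lookup (\<Sum>i\<in>{1..k+1}. Poly_Mapping.single (t i) (e i)) v"
    proof (cases "v \<in> t ` {1..k+1}")
      case True
      then obtain i where i: "i \<in> {1..k+1}" "v = t i"
        by blast
      with t(2) assms(2) have "Poly_Mapping.lookup m v < d v"
        by blast
      moreover have "d (t i) = d i"
        using t(3) i(1) by blast
      moreover have "d (t i) - Poly_Mapping.lookup m (t i) = (if i = j then r else 1)"
        using t(4,5) i(1) by auto
      ultimately have "Poly_Mapping.lookup m v = e i"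
        using i(2) by (auto simp: e_def)
      moreover have "Poly_Mapping.lookup (\<Sum>i\<in>{1..k+1}. Poly_Mapping.single (t i) (e i)) (t i) = e i"
        using t(1) finite_atLeastAtMost i(1) by (rule lookup_sum_single_inj_on)
      ultimately show ?thesis
        using i(2) by simp
    next
      case False
      moreover have "Poly_Mapping.lookup m v = 0"
      proof (cases "v \<in> {1..n}")
        case True
        with False t(6) assms(2)
        have "d v - Poly_Mapping.lookup m v = d v" "Poly_Mapping.lookup m v < d v"
          by blast+
        then show ?thesis
          by linarith
      qed (use assms(3) in \<open>auto simp: not_in_keys_iff_lookup_eq_zero\<close>)
      ultimately show ?thesis
        using lookup_sum_single_notin[of v t "{1..k+1}" e] by metis
    qed
  qed
  with j t show ?thesis
    unfolding e_def by blast
qed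

lemma mono_deg_eq_sum:
  assumes "Poly_Mapping.keys m \<subseteq> {1..n}"
  shows "mono_deg m = (\<Sum>i=1..n. Poly_Mapping.lookup m i)"
  unfolding mono_deg_def using assms
  by (intro sum.mono_neutral_left) (auto simp: not_in_keys_iff_lookup_eq_zero)

lemma mono_deg_le_mpoly_tdeg:
  assumes "m \<in> Poly_Mapping.keys f"
  shows "mono_deg m \<le> mpoly_tdeg f"
  unfolding mpoly_tdeg_def using assms by (intro Max_ge) auto

lemma footprint_bound_mpoly:
  fixes f :: "'a::idom mpoly_rep" and K :: "nat \<Rightarrow> 'a set"
  assumes "\<forall>i\<in>{1..n}. finite (K i)" "f \<noteq> 0"
    and vars: "\<forall>m\<in>Poly_Mapping.keys f. Poly_Mapping.keys m \<subseteq> {1..n}"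
    and "\<forall>m\<in>Poly_Mapping.keys f. \<forall>i\<in>{1..n}. Poly_Mapping.lookup m i < card (K i)"
  shows "\<exists>m\<in>Poly_Mapping.keys f.
           (\<Prod>i=1..n. card (K i) - Poly_Mapping.lookup m i) \<le> hamming_weight_eval n K f"
proof -
  define S where "S = Poly_Mapping.lookup ` Poly_Mapping.keys f"
  define C where "C g = Poly_Mapping.lookup f (Abs_poly_mapping g)" for g
  have C_lookup: "C (Poly_Mapping.lookup m) = Poly_Mapping.lookup f m" for m
    by (simp add: C_def lookup_inverse)
  have lookup_out: "Poly_Mapping.lookup m i = 0" if "m \<in> Poly_Mapping.keys f" "i \<notin> {1..n}" for m i
    using vars that by (meson not_in_keys_iff_lookup_eq_zero subsetD)
  have eval: "eval_terms n S C \<alpha> = mpoly_eval f \<alpha>" for \<alpha>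
  proof -
    have "eval_terms n S C \<alpha> = (\<Sum>m\<in>Poly_Mapping.keys f.
        Poly_Mapping.lookup f m * (\<Prod>i=1..n. \<alpha> i ^ Poly_Mapping.lookup m i))"
      unfolding eval_terms_def S_def
      by (subst sum.reindex) (auto simp: inj_on_def C_lookup)
    also have "\<dots> = mpoly_eval f \<alpha>"
      unfolding mpoly_eval_def using vars
      by (intro sum.cong refl arg_cong2[where f = "(*)"] prod.mono_neutral_right)
        (auto simp: not_in_keys_iff_lookup_eq_zero)
    finally show ?thesis .
  qed
  have "\<exists>g\<in>S. C g \<noteq> 0"
    using \<open>f \<noteq> 0\<close> by (auto simp: S_def C_lookup in_keys_iff simp flip: keys_eq_empty)
  with assms(1,4) lookup_out obtain g where "g \<in> S" "C g \<noteq> 0"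
    and "(\<Prod>i=1..n. card (K i) - g i) \<le> card {\<alpha> \<in> PiE {1..n} K. eval_terms n S C \<alpha> \<noteq> 0}"
    using footprint_bound[of n K S C] by (auto simp: S_def)
  then show ?thesis
    unfolding hamming_weight_eval_def eval[symmetric] by (auto simp: S_def)
qed

lemma monomial_shape_of_tight_bound:
  fixes d :: "nat \<Rightarrow> nat" and m :: "nat \<Rightarrow>\<^sub>0 nat"
  assumes mono: "mono_on {1..n} d"
    and reduced: "\<forall>v\<in>{1..n}. Poly_Mapping.lookup m v < d v"
    and keys: "Poly_Mapping.keys m \<subseteq> {1..n}"
    and deg: "mono_deg m \<le> (\<Sum>i=1..k. d i - 1) + l"
    and "k < n" "0 < l" "l < d (k+1)"
    and tight: "(\<Prod>i=1..n. d i - Poly_Mapping.lookup m i) \<le> (d (k+1) - l) * (\<Prod>i=k+2..n. d i)"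
  shows "\<exists>j\<in>{1..k+1}. d (k+1) - l \<le> d j \<and> (\<exists>t. inj_on t {1..k+1} \<and> t ` {1..k+1} \<subseteq> {1..n} \<and>
           (\<forall>i\<in>{1..k+1}. d (t i) = d i) \<and>
           m = (\<Sum>i\<in>{1..k+1}. Poly_Mapping.single (t i)
                  (if i = j then d j - (d (k+1) - l) else d i - 1)))"
proof (rule monomial_of_extremal_box[OF _ reduced keys])
  let ?x = "\<lambda>v. d v - Poly_Mapping.lookup m v"
  have "(\<Sum>v=1..n. d v - ?x v) = (\<Sum>v=1..n. Poly_Mapping.lookup m v)"
    using reduced by (intro sum.cong) (auto simp: less_imp_le)
  also have "\<dots> \<le> (\<Sum>i=1..k. d i - 1) + (d (k+1) - (d (k+1) - l))"
    using deg \<open>l < d (k+1)\<close> keys by (simp add: mono_deg_eq_sum)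
  finally have "within_budget d ?x n k (d (k+1) - l)"
    unfolding within_budget_def .
  moreover have "\<forall>v\<in>{1..n}. 1 \<le> ?x v \<and> ?x v \<le> d v"
    using reduced by fastforce
  ultimately have "box_prod_bound d ?x n k (d (k+1) - l)"
    using mono assms(5-7) by (intro box_prod_bound_within_budget) auto
  with tight show "extremal_box d ?x n k (d (k+1) - l)"
    by (auto simp: box_prod_bound_def)
qed

theorem mainTheorem9:
  fixes K :: "nat \<Rightarrow> 'a::{field,finite} set"
    and f :: "'a mpoly_rep"
    and n k l :: nat
  defines "d \<equiv> \<lambda>i. card (K i)"
  assumes subf: "\<forall>i\<in>{1..n}. is_subfield (K i)"
    and chain: "\<forall>i\<in>{1..<n}. K i \<subseteq> K (Suc i)"
    and vars: "\<forall>m\<in>Poly_Mapping.keys f. Poly_Mapping.keys m \<subseteq> {1..n}"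
    and nonzero: "f \<noteq> 0"
    and deg: "mpoly_tdeg f = (\<Sum>i=1..k. d i - 1) + l"
    and k_lt: "k < n"
    and l_pos: "0 < l"
    and l_le: "l \<le> d (k+1) - 1"
    and reduced: "\<forall>m\<in>Poly_Mapping.keys f. \<forall>i\<in>{1..n}. Poly_Mapping.lookup m i < d i"
    and weight: "hamming_weight_eval n K f = (d (k+1) - l) * (\<Prod>i=k+2..n. d i)"
  shows "\<exists>j\<in>{1..k+1}. d j \<ge> d (k+1) - l \<and>
           (\<exists>t::nat \<Rightarrow> nat. inj_on t {1..k+1} \<and> t ` {1..k+1} \<subseteq> {1..n} \<and>
              (\<forall>i\<in>{1..k+1}. K (t i) = K i) \<and>
              Poly_Mapping.lookup f (\<Sum>i\<in>{1..k+1}. Poly_Mapping.single (t i)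
                   (if i = j then d j - (d (k+1) - l) else d i - 1)) \<noteq> 0)"
proof -
  have fin: "\<forall>i\<in>{1..n}. finite (K i)"
    by simp
  obtain m where m: "m \<in> Poly_Mapping.keys f"
    and m_weight: "(\<Prod>i=1..n. d i - Poly_Mapping.lookup m i) \<le> hamming_weight_eval n K f"
    using footprint_bound_mpoly[OF fin nonzero vars] reduced unfolding d_def by blast
  have "\<exists>j\<in>{1..k+1}. d (k+1) - l \<le> d j \<and> (\<exists>t. inj_on t {1..k+1} \<and> t ` {1..k+1} \<subseteq> {1..n} \<and>
           (\<forall>i\<in>{1..k+1}. d (t i) = d i) \<and>
           m = (\<Sum>i\<in>{1..k+1}. Poly_Mapping.single (t i)
                  (if i = j then d j - (d (k+1) - l) else d i - 1)))"
  proof (rule monomial_shape_of_tight_bound)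
    show "mono_on {1..n} d"
      unfolding d_def by (rule chain_card_mono[OF chain fin])
    show "mono_deg m \<le> (\<Sum>i=1..k. d i - 1) + l"
      using mono_deg_le_mpoly_tdeg[OF m] deg by simp
  qed (use m m_weight weight reduced vars k_lt l_pos l_le in auto)
  moreover have "K (t i) = K i" if "t ` {1..k+1} \<subseteq> {1..n}" "d (t i) = d i" "i \<in> {1..k+1}" for t i
    using chain_eq_if_card_eq[OF chain fin, of "t i" i] that k_lt unfolding d_def by force
  ultimately show ?thesis
    using m by (metis (no_types, lifting) in_keys_iff)
qed

end
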